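(* Let $\Gamma=\Lambda\times\Gamma_t$ be a finitely generated abelian group ($\Lambda$ free of rank $n$, $\Gamma_t$ finite), $T=\mathrm{Hom}(\Gamma,\mathbb{C}^* )$, and $X$ a finite list of nonzero elements of $\Lambda$ spanning a sublattice of finite index in $\Lambda$. For every $C\in\mathcal{C}(X)$, letting $X_C=\{\chi\in X: H_\chi\supseteq C\}$, $$nbc(X_C)=(-1)^{n-\dim C}\mu(T_C,C).$$
   Context: Each $\chi\in\Lambda$ gives a character $t\mapsto t(\chi)$ of $T$ with kernel $H_\chi=\{t:t(\chi)=1\}$; $H_A=\bigcap_{\chi\in A}H_\chi$ ($H_\emptyset=T$). $\mathcal{C}(X)$ is the set of connected components of all $H_A$, $A\subseteq X$, ordered by reverse inclusion; $\mu$ is its Möbius function; $T_C$ is the component of $T$ containing $C$; $\dim$ is complex dimension. For a list $Y$ of vectors in $\Lambda\otimes\mathbb{R}$, its Tutte polynomial is $T_Y(x,y)=\sum_{A\subseteq Y}(x-1)^{r(Y)-r(A)}(y-1)^{|A|-r(A)}$ with $r$ the dimension of the real span, and $nbc(Y)=T_Y(1,0)$, which equals the number of no-broken-circuit bases of $Y$ (bases of the span of $Y$ extracted from $Y$ with no externally active element, for a fixed total order on $Y$). *)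

theory Defs
  imports "HOL-Analysis.Analysis" "HOL-Algebra.Group"
begin

text \<open>Setting: \<Lambda> = int^'n (free of rank n = CARD('n)), \<Gamma>_t = carrier Gt a finite
abelian group, \<Gamma> = \<Lambda> \<times> \<Gamma>_t. Elements of T = Hom(\<Gamma>, C^*) are functions on
(int^'n) \<times> 'g, extended by the constant 1 outside \<Lambda> \<times> carrier Gt. T carries the
topology of pointwise convergence (product topology on the function type).\<close>

definition torus :: "'g monoid \<Rightarrow> ((int^'n) \<times> 'g \<Rightarrow> complex) set" where
  "torus Gt = {t.
     (\<forall>v g. g \<in> carrier Gt \<longrightarrow> t (v, g) \<noteq> 0) \<and>
     (\<forall>v w g h. g \<in> carrier Gt \<longrightarrow> h \<in> carrier Gt \<longrightarrow>
         t (v + w, g \<otimes>\<^bsub>Gt\<^esub> h) = t (v, g) * t (w, h)) \<and>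
     (\<forall>v g. g \<notin> carrier Gt \<longrightarrow> t (v, g) = 1)}"

definition char_eval :: "'g monoid \<Rightarrow> int^'n \<Rightarrow> ((int^'n) \<times> 'g \<Rightarrow> complex) \<Rightarrow> complex" where
  "char_eval Gt ch t = t (ch, \<one>\<^bsub>Gt\<^esub>)"

definition H_chi :: "'g monoid \<Rightarrow> int^'n \<Rightarrow> ((int^'n) \<times> 'g \<Rightarrow> complex) set" where
  "H_chi Gt ch = {t \<in> torus Gt. char_eval Gt ch t = 1}"

definition H_set :: "'g monoid \<Rightarrow> (int^'n) set \<Rightarrow> ((int^'n) \<times> 'g \<Rightarrow> complex) set" where
  "H_set Gt A = torus Gt \<inter> (\<Inter>ch\<in>A. H_chi Gt ch)"

definition layers :: "'g monoid \<Rightarrow> (int^'n) list \<Rightarrow> ((int^'n) \<times> 'g \<Rightarrow> complex) set set" where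
  "layers Gt X = (\<Union>A\<in>Pow (set X). components (H_set Gt A))"

definition ambient_comp :: "'g monoid \<Rightarrow> ((int^'n) \<times> 'g \<Rightarrow> complex) set \<Rightarrow> ((int^'n) \<times> 'g \<Rightarrow> complex) set" where
  "ambient_comp Gt C = (THE D. D \<in> components (torus Gt) \<and> C \<subseteq> D)"

text \<open>Complex dimension of a subset S of T (used for components of the H_A, which
are cosets of subtori): the complex dimension of its Lie algebra, i.e. of the set of
v \<in> C^n = Lie(T) such that S is stable under translation by exp(z v) for all z \<in> C,
where exp(v) \<in> T acts by \<chi> \<mapsto> exp(\<langle>v,\<chi>\<rangle>) on \<Lambda> and trivially on \<Gamma>_t.\<close>
definition lie_alg :: "'g monoid \<Rightarrow> ((int^'n) \<times> 'g \<Rightarrow> complex) set \<Rightarrow> (complex^'n) set" where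
  "lie_alg Gt S = {v. \<forall>s\<in>S. \<forall>z::complex.
      (\<lambda>(ch, g). if g \<in> carrier Gt
                then s (ch, g) * exp (z * (\<Sum>i\<in>UNIV. v $ i * of_int (ch $ i)))
                else s (ch, g)) \<in> S}"

definition cdim :: "'g monoid \<Rightarrow> ((int^'n) \<times> 'g \<Rightarrow> complex) set \<Rightarrow> nat" where
  "cdim Gt S = vec.dim (lie_alg Gt S)"

definition mobius :: "'a set \<Rightarrow> ('a \<Rightarrow> 'a \<Rightarrow> bool) \<Rightarrow> 'a \<Rightarrow> 'a \<Rightarrow> int" where
  "mobius P leq = (THE f.
     (\<forall>x y. x \<notin> P \<or> y \<notin> P \<longrightarrow> f x y = 0) \<and>
     (\<forall>x\<in>P. \<forall>y\<in>P. f x y =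
        (if x = y then 1
         else if leq x y then - (\<Sum>z\<in>{z\<in>P. leq x z \<and> leq z y \<and> z \<noteq> y}. f x z)
         else 0)))"

definition to_real :: "int^'n \<Rightarrow> real^'n" where
  "to_real ch = (\<chi> i. real_of_int (ch $ i))"

definition rk :: "(real^'n) list \<Rightarrow> nat set \<Rightarrow> nat" where
  "rk Y A = dim ((\<lambda>i. Y ! i) ` A)"

text \<open>Tutte polynomial of a list Y (sublists = subsets of positions), evaluated.\<close>
definition tutte :: "(real^'n) list \<Rightarrow> int \<Rightarrow> int \<Rightarrow> int" where
  "tutte Y x y = (\<Sum>A\<in>Pow {..<length Y}.
      (x - 1) ^ (rk Y {..<length Y} - rk Y A) * (y - 1) ^ (card A - rk Y A))"

definition nbc :: "(real^'n) list \<Rightarrow> int" where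
  "nbc Y = tutte Y 1 0"

definition lattice_span :: "(int^'n) list \<Rightarrow> (int^'n) set" where
  "lattice_span X = {(\<Sum>i<length X. c i *s (X ! i)) | c :: nat \<Rightarrow> int. True}"

definition finite_index :: "(int^'n) set \<Rightarrow> bool" where
  "finite_index L = finite ((\<lambda>v. (\<lambda>w. v + w) ` L) ` UNIV)"

end

theory Submission
  imports Defs
begin

(* For a layer C let S(C) be the characters of X vanishing on C.  Every subset A of S(C) cuts
  out a layer above C, the component of H_A through C, and this layer is C itself exactly when
  A spans the same real space as S(C): a character in the rational span of A takes only
  finitely many values on H_A, hence is constant on its components, while a direction orthogonal
  to A but not to S(C) gives a one-parameter family of translates of C inside H_A that leaves C.
  Grouping the subsets of S(C) by the layer they cut out, the signed counts g(D) of generating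
  sets satisfy sum of g(D) over D in [C, T_C] = [S(C) = {}], which is the recursion defining
  mu(T_C, -); hence mu(T_C, C) is the signed count of spanning subsets of S(C).  The Tutte
  polynomial at (1,0) gives the same count times (-1)^rank S(C), and rank S(C) = n - dim C since
  the Lie algebra of C is the complex annihilator of S(C). *)

section \<open>The Moebius recursion\<close>

(* The specification in the definition of mobius says exactly f = mobius_step P leq f. *)
definition mobius_step :: "'a set \<Rightarrow> ('a \<Rightarrow> 'a \<Rightarrow> bool) \<Rightarrow> ('a \<Rightarrow> 'a \<Rightarrow> int) \<Rightarrow> 'a \<Rightarrow> 'a \<Rightarrow> int" where
  "mobius_step P leq f x y = (if x \<notin> P \<or> y \<notin> P then 0 else if x = y then 1
     else if leq x y then - (\<Sum>z\<in>{z\<in>P. leq x z \<and> leq z y \<and> z \<noteq> y}. f x z) else 0)"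

lemma mobius_step_cong:
  assumes "\<And>z. x \<in> P \<Longrightarrow> y \<in> P \<Longrightarrow> z \<in> P \<Longrightarrow> leq z y \<Longrightarrow> z \<noteq> y \<Longrightarrow> f x z = g x z"
  shows "mobius_step P leq f x y = mobius_step P leq g x y"
  unfolding mobius_step_def using assms by (auto intro!: sum.cong)

fun mobius_approx :: "nat \<Rightarrow> 'a set \<Rightarrow> ('a \<Rightarrow> 'a \<Rightarrow> bool) \<Rightarrow> 'a \<Rightarrow> 'a \<Rightarrow> int" where
  "mobius_approx 0 P leq = (\<lambda>x y. 0)"
| "mobius_approx (Suc k) P leq = mobius_step P leq (mobius_approx k P leq)"

context
  fixes P :: "'a set" and leq :: "'a \<Rightarrow> 'a \<Rightarrow> bool" and m :: "'a \<Rightarrow> nat"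
  assumes rank_decreasing: "\<And>y z. y \<in> P \<Longrightarrow> z \<in> P \<Longrightarrow> leq z y \<Longrightarrow> z \<noteq> y \<Longrightarrow> m z < m y"
begin

lemma mobius_approx_stable:
  "m y < k1 \<Longrightarrow> m y < k2 \<Longrightarrow> mobius_approx k1 P leq x y = mobius_approx k2 P leq x y"
proof (induction "m y" arbitrary: y k1 k2 rule: less_induct)
  case less
  obtain j1 j2 where j: "k1 = Suc j1" "k2 = Suc j2"
    using less.prems by (cases k1; cases k2) auto
  have "mobius_step P leq (mobius_approx j1 P leq) x y = mobius_step P leq (mobius_approx j2 P leq) x y"
  proof (rule mobius_step_cong)
    fix z assume "y \<in> P" "z \<in> P" "leq z y" "z \<noteq> y"
    then have "m z < m y" by (rule rank_decreasing)
    then show "mobius_approx j1 P leq x z = mobius_approx j2 P leq x z"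
      using less.hyps[of z j1 j2] less.prems j by linarith
  qed
  then show ?case using j by simp
qed

lemma mobius_eq_step: "mobius P leq x y = mobius_step P leq (mobius P leq) x y"
proof -
  define F where "F x y = mobius_approx (Suc (m y)) P leq x y" for x y
  have F_step: "F x y = mobius_step P leq F x y" for x y
  proof -
    have "F x y = mobius_step P leq (mobius_approx (m y) P leq) x y"
      by (simp add: F_def)
    also have "\<dots> = mobius_step P leq F x y"
    proof (rule mobius_step_cong)
      fix z assume "y \<in> P" "z \<in> P" "leq z y" "z \<noteq> y"
      then have "m z < m y" by (rule rank_decreasing)
      then show "mobius_approx (m y) P leq x z = F x z"
        unfolding F_def by (intro mobius_approx_stable) auto
    qed
    finally show ?thesis .
  qed
  have F_unique: "f x y = F x y" if f: "\<forall>x y. f x y = mobius_step P leq f x y" for f x y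
  proof (induction "m y" arbitrary: y rule: less_induct)
    case less
    have "f x y = mobius_step P leq f x y" using f by blast
    also have "\<dots> = mobius_step P leq F x y"
      by (rule mobius_step_cong) (use less rank_decreasing in auto)
    also have "\<dots> = F x y" by (rule F_step[symmetric])
    finally show ?case .
  qed
  have spec_iff: "((\<forall>x y. x \<notin> P \<or> y \<notin> P \<longrightarrow> f x y = 0) \<and>
     (\<forall>x\<in>P. \<forall>y\<in>P. f x y = (if x = y then 1 else if leq x y
        then - (\<Sum>z\<in>{z\<in>P. leq x z \<and> leq z y \<and> z \<noteq> y}. f x z) else 0)))
     \<longleftrightarrow> (\<forall>x y. f x y = mobius_step P leq f x y)" for f
    unfolding mobius_step_def by (auto simp del: sum.cong)
  have "mobius P leq = F"
    unfolding mobius_def spec_iff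
    by (rule the_equality) (use F_step F_unique in blast)+
  then show ?thesis using F_step by simp
qed

end

lemma sum_Pow_neg_one_power:
  assumes "finite S"
  shows "(\<Sum>A\<in>Pow S. (-1::int) ^ card A) = (if S = {} then 1 else 0)"
proof (cases "S = {}")
  case False
  then have "card {A. A \<in> Pow S \<and> even (card A)} = card {A. A \<in> Pow S \<and> odd (card A)}"
    using card_subsupersets_even_odd[OF assms, of "{}"] by auto
  then show ?thesis
    using False assms by (simp add: sum_alternating_cancels)
qed simp

section \<open>The Tutte polynomial at (1,0)\<close>

lemma nbc_eq_spanning_sum:
  fixes Y :: "(real^'n) list"
  shows "nbc Y = (-1) ^ dim (set Y) *
    (\<Sum>A\<in>{A\<in>Pow {..<length Y}. span ((!) Y ` A) = span (set Y)}. (-1) ^ card A)"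
proof -
  define r where "r = dim (set Y)"
  have all: "(!) Y ` {..<length Y} = set Y"
    by (auto simp: in_set_conv_nth)
  have summand: "(1 - 1) ^ (rk Y {..<length Y} - rk Y A) * (0 - 1) ^ (card A - rk Y A)
      = (if span ((!) Y ` A) = span (set Y) then (-1) ^ r * (-1) ^ card A else 0 :: int)"
    if A: "A \<subseteq> {..<length Y}" for A
  proof -
    have rk_all: "rk Y {..<length Y} = r" by (simp add: rk_def r_def all)
    have rk_card: "rk Y A \<le> card A"
    proof -
      have "dim ((!) Y ` A) \<le> card ((!) Y ` A)"
        using finite_subset[OF A] by (intro dim_le_card') simp
      also have "\<dots> \<le> card A"
        using finite_subset[OF A] by (rule card_image_le) simp
      finally show ?thesis unfolding rk_def .
    qed
    show ?thesis
    proof (cases "span ((!) Y ` A) = span (set Y)")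
      case True
      then have "rk Y A = r" unfolding rk_def r_def by (rule span_eq_dim)
      moreover have "(-1::int) ^ (card A - r) = (-1) ^ r * (-1) ^ card A"
        using rk_card \<open>rk Y A = r\<close>
        by (simp flip: neg_one_power_add_eq_neg_one_power_diff add: power_add)
      ultimately show ?thesis using True rk_all by simp
    next
      case False
      have "rk Y A \<noteq> r"
      proof
        assume "rk Y A = r"
        then have "span ((!) Y ` A) = span (set Y)"
          unfolding rk_def r_def by (intro dim_eq_span) (use A all in auto)
        with False show False ..
      qed
      moreover have "rk Y A \<le> r"
        unfolding rk_def r_def by (rule dim_subset) (use A all in auto)
      ultimately show ?thesis using False rk_all by simp
    qed
  qed
  have "nbc Y = (\<Sum>A\<in>Pow {..<length Y}.
      if span ((!) Y ` A) = span (set Y) then (-1) ^ r * (-1) ^ card A else 0)"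
    unfolding nbc_def tutte_def by (rule sum.cong[OF refl], rule summand) simp
  also have "\<dots> = (-1) ^ r * (\<Sum>A\<in>{A\<in>Pow {..<length Y}. span ((!) Y ` A) = span (set Y)}. (-1) ^ card A)"
    by (simp add: sum.inter_filter[symmetric] sum_distrib_left)
  finally show ?thesis unfolding r_def .
qed

lemma nbc_map_distinct:
  fixes v :: "'a \<Rightarrow> real^'n"
  assumes "distinct xs"
  shows "nbc (map v xs) = (-1) ^ dim (v ` set xs) *
    (\<Sum>B\<in>{B\<in>Pow (set xs). span (v ` B) = span (v ` set xs)}. (-1) ^ card B)"
proof -
  let ?I = "{..<length xs}" and ?Q = "\<lambda>B. span (v ` B) = span (v ` set xs)"
  have inj: "inj_on ((!) xs) ?I"
    using assms by (simp add: inj_on_nth)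
  have img: "(!) xs ` ?I = set xs"
    by (auto simp: in_set_conv_nth)
  have nth_map_img: "(!) (map v xs) ` A = v ` ((!) xs ` A)" if "A \<subseteq> ?I" for A
    unfolding image_image using that by (intro image_cong) auto
  have "{A\<in>Pow ?I. span ((!) (map v xs) ` A) = span (set (map v xs))} = {A\<in>Pow ?I. ?Q ((!) xs ` A)}"
    using nth_map_img by auto
  moreover have "(\<Sum>B\<in>{B\<in>Pow (set xs). ?Q B}. (-1::int) ^ card B)
      = (\<Sum>A\<in>{A\<in>Pow ?I. ?Q ((!) xs ` A)}. (-1) ^ card A)"
  proof (rule sum.reindex_cong)
    show "inj_on (image ((!) xs)) {A\<in>Pow ?I. ?Q ((!) xs ` A)}"
      by (rule inj_on_subset[OF inj_on_image_Pow[OF inj]]) auto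
    show "{B\<in>Pow (set xs). ?Q B} = image ((!) xs) ` {A\<in>Pow ?I. ?Q ((!) xs ` A)}"
    proof
      show "{B\<in>Pow (set xs). ?Q B} \<subseteq> image ((!) xs) ` {A\<in>Pow ?I. ?Q ((!) xs ` A)}"
      proof
        fix B assume B: "B \<in> {B\<in>Pow (set xs). ?Q B}"
        then have "B \<subseteq> (!) xs ` ?I" using img by simp
        then obtain A where "A \<subseteq> ?I" "B = (!) xs ` A"
          by (rule subset_imageE)
        with B show "B \<in> image ((!) xs) ` {A\<in>Pow ?I. ?Q ((!) xs ` A)}" by blast
      qed
    qed (use img in auto)
    show "(-1) ^ card ((!) xs ` A) = (-1) ^ card A" if "A \<in> {A\<in>Pow ?I. ?Q ((!) xs ` A)}" for A
      using that by (simp add: card_image inj_on_subset[OF inj])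
  qed
  ultimately show ?thesis
    unfolding nbc_eq_spanning_sum by simp
qed

section \<open>Real spans of integral vectors\<close>

lemma mem_lattice_span_iff: "w \<in> lattice_span L \<longleftrightarrow> (\<exists>c. w = (\<Sum>j<length L. c j *s L ! j))"
  by (simp add: lattice_span_def)

lemma lattice_span_ConsI:
  assumes "w \<in> lattice_span L"
  shows "a *s s + w \<in> lattice_span (s # L)"
proof -
  obtain c where "w = (\<Sum>j<length L. c j *s L ! j)"
    using assms unfolding mem_lattice_span_iff ..
  then have "a *s s + w = (\<Sum>j<length (s # L). case_nat a c j *s (s # L) ! j)"
    unfolding length_Cons sum.lessThan_Suc_shift by simp
  then show ?thesis
    unfolding mem_lattice_span_iff by blast
qed

lemma smult_mem_lattice_span:
  assumes "w \<in> lattice_span L"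
  shows "a *s w \<in> lattice_span L"
proof -
  obtain c where "w = (\<Sum>j<length L. c j *s L ! j)"
    using assms unfolding mem_lattice_span_iff ..
  then have "a *s w = (\<Sum>j<length L. (a * c j) *s L ! j)"
    by (simp add: vec_eq_iff sum_component sum_distrib_left mult.assoc)
  then show ?thesis
    unfolding mem_lattice_span_iff by (rule exI[of _ "\<lambda>j. a * c j"])
qed

lemma to_real_eq_0_iff: "to_real ch = 0 \<longleftrightarrow> ch = 0"
  by (simp add: to_real_def vec_eq_iff)

(* The integral map f u = s_j0 u - u_j0 s kills the first vector s, which reduces the problem to
  the shorter list map f L without leaving the lattice. *)
lemma multiple_in_lattice_span_if_in_span:
  fixes ch :: "int^'n"
  assumes "to_real ch \<in> span (to_real ` set L)"
  shows "\<exists>k. k \<noteq> 0 \<and> k *s ch \<in> lattice_span L"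
  using assms
proof (induction "length L" arbitrary: L ch)
  case 0
  then have "ch = 0"
    by (simp add: to_real_eq_0_iff)
  moreover have "L = []" using "0.hyps" by simp
  ultimately show ?case
    by (intro exI[of _ 1]) (simp add: mem_lattice_span_iff)
next
  case (Suc n)
  then obtain s L' where L: "L = s # L'" and n: "n = length L'"
    by (cases L) auto
  note IH = Suc.hyps(1)
  show ?case
  proof (cases "s = 0")
    case True
    then have "to_real ch \<in> span (to_real ` set L')"
      using Suc.prems unfolding L by (simp add: to_real_eq_0_iff[of 0, simplified])
    from IH[OF n this] obtain k where k: "k \<noteq> 0" "k *s ch \<in> lattice_span L'"
      by blast
    have "k *s ch \<in> lattice_span (s # L')"
      using lattice_span_ConsI[OF k(2), of 0 s] by simp
    with k(1) show ?thesis unfolding L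
      by (intro exI[of _ k] conjI)
  next
    case False
    then obtain j0 where j0: "s $ j0 \<noteq> 0"
      by (metis vec_eq_iff zero_index)
    define f where "f u = s $ j0 *s u - u $ j0 *s s" for u :: "int^'n"
    define g where "g w = real_of_int (s $ j0) *\<^sub>R w - w $ j0 *\<^sub>R to_real s" for w :: "real^'n"
    have "linear g"
      unfolding linear_iff g_def by (simp add: algebra_simps)
    have g_to_real: "g (to_real u) = to_real (f u)" for u
      by (simp add: g_def f_def to_real_def vec_eq_iff)
    have "g (to_real s) = 0"
      by (simp add: g_def to_real_def vec_eq_iff)
    obtain a where "to_real ch - a *\<^sub>R to_real s \<in> span (to_real ` set L')"
      using Suc.prems unfolding L list.set image_insert span_insert by blast
    then have "g (to_real ch - a *\<^sub>R to_real s) \<in> span (g ` to_real ` set L')"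
      unfolding span_linear_image[OF \<open>linear g\<close>] by (rule imageI)
    moreover have "g (to_real ch - a *\<^sub>R to_real s) = to_real (f ch)"
      using \<open>g (to_real s) = 0\<close>
      by (simp add: linear_diff[OF \<open>linear g\<close>] linear_scale[OF \<open>linear g\<close>] g_to_real)
    moreover have "g ` to_real ` set L' = to_real ` set (map f L')"
      by (simp add: image_image g_to_real)
    ultimately have "to_real (f ch) \<in> span (to_real ` set (map f L'))"
      by simp
    moreover have "n = length (map f L')" using n by simp
    ultimately have "\<exists>k. k \<noteq> 0 \<and> k *s f ch \<in> lattice_span (map f L')"
      by (intro IH)
    then obtain k where k: "k \<noteq> 0" "k *s f ch \<in> lattice_span (map f L')"
      by blast
    obtain c where "k *s f ch = (\<Sum>j<length L'. c j *s map f L' ! j)"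
      using k(2) unfolding mem_lattice_span_iff length_map ..
    also have "\<dots> = (\<Sum>j<length L'. c j *s f (L' ! j))"
      by (rule sum.cong) simp_all
    also have "\<dots> = f (\<Sum>j<length L'. c j *s L' ! j)"
      by (simp add: f_def vec_eq_iff sum_component right_diff_distrib sum_subtractf
          sum_distrib_left sum_distrib_right mult.left_commute mult.assoc)
    finally have "(k * s $ j0) *s ch = (k * ch $ j0 - (\<Sum>j<length L'. c j *s L' ! j) $ j0) *s s
        + s $ j0 *s (\<Sum>j<length L'. c j *s L' ! j)"
      by (simp add: f_def vec_eq_iff algebra_simps)
    moreover have "(\<Sum>j<length L'. c j *s L' ! j) \<in> lattice_span L'"
      unfolding mem_lattice_span_iff by (rule exI, rule refl)
    ultimately have "(k * s $ j0) *s ch \<in> lattice_span (s # L')"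
      by (simp only:) (intro lattice_span_ConsI smult_mem_lattice_span)
    then show ?thesis unfolding L
      using k(1) j0 by (intro exI[of _ "k * s $ j0"] conjI) simp_all
  qed
qed

section \<open>Complex annihilators\<close>

definition pairing :: "complex^'n \<Rightarrow> int^'n \<Rightarrow> complex" where
  "pairing v ch = (\<Sum>i\<in>UNIV. v $ i * of_int (ch $ i))"

definition complexify :: "real^'n \<Rightarrow> complex^'n" where
  "complexify w = (\<chi> j. complex_of_real (w $ j))"

lemma pairing_complexify: "pairing (complexify w) ch = complex_of_real (w \<bullet> to_real ch)"
  by (simp add: pairing_def complexify_def inner_vec_def to_real_def)

lemma Re_pairing: "Re (pairing v ch) = (\<chi> j. Re (v $ j)) \<bullet> to_real ch"
  by (simp add: pairing_def inner_vec_def to_real_def Re_sum)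

lemma Im_pairing: "Im (pairing v ch) = (\<chi> j. Im (v $ j)) \<bullet> to_real ch"
  by (simp add: pairing_def inner_vec_def to_real_def Im_sum)

lemma inj_complexify: "inj complexify"
  by (auto simp: inj_def complexify_def vec_eq_iff)

lemma dim_orthogonal_vectors:
  fixes U :: "'a::euclidean_space set"
  shows "dim {w. \<forall>u\<in>U. w \<bullet> u = 0} + dim U = DIM('a)"
proof -
  have "{w. \<forall>u\<in>U. w \<bullet> u = 0} = {w \<in> UNIV. \<forall>u\<in>span U. orthogonal u w}"
    by (auto simp: orthogonal_def inner_commute span_base
        intro: orthogonal_to_span[unfolded orthogonal_def])
  then show ?thesis
    using dim_subspace_orthogonal_to_vectors[of "span U" UNIV] by simp
qed

lemma independent_complexify:
  assumes "independent B"
  shows "vec.independent (complexify ` B)"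
proof (rule vec.independent_if_scalars_zero)
  have "finite B" using assms by (rule finiteI_independent)
  then show "finite (complexify ` B)" by simp
  fix f and x assume f: "(\<Sum>x\<in>complexify ` B. f x *s x) = 0" and x: "x \<in> complexify ` B"
  have inj: "inj_on complexify B"
    using inj_complexify by (rule inj_on_subset) simp
  have sum0: "(\<Sum>y\<in>B. f (complexify y) *s complexify y) = 0"
    using f by (simp add: sum.reindex[OF inj])
  have re: "(\<Sum>y\<in>B. Re (f (complexify y)) *\<^sub>R y) = 0" and im: "(\<Sum>y\<in>B. Im (f (complexify y)) *\<^sub>R y) = 0"
    using arg_cong[OF sum0, of "\<lambda>v. \<chi> j. Re (v $ j)"] arg_cong[OF sum0, of "\<lambda>v. \<chi> j. Im (v $ j)"]
    by (simp_all add: vec_eq_iff sum_component complexify_def Re_sum Im_sum)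
  have coeffs_zero: "\<forall>y\<in>B. c y = 0" if "(\<Sum>y\<in>B. c y *\<^sub>R y) = 0" for c
    using assms that unfolding independent_explicit by blast
  obtain y where "y \<in> B" "x = complexify y" using x by blast
  then show "f x = 0"
    using coeffs_zero[OF re] coeffs_zero[OF im] by (simp add: complex_eq_iff)
qed

lemma dim_pairing_annihilator:
  fixes S :: "(int^'n) set"
  shows "vec.dim {v::complex^'n. \<forall>ch\<in>S. pairing v ch = 0} = CARD('n) - dim (to_real ` S)"
proof -
  define W where "W = {w::real^'n. \<forall>u\<in>to_real ` S. w \<bullet> u = 0}"
  define V where "V = {v::complex^'n. \<forall>ch\<in>S. pairing v ch = 0}"
  obtain B where B: "B \<subseteq> W" "independent B" "W \<subseteq> span B" "card B = dim W"
    by (rule basis_exists)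
  have "finite B" using B(2) by (rule finiteI_independent)
  have "complexify ` B \<subseteq> V"
    using B(1) by (auto simp: V_def W_def pairing_complexify)
  moreover have "V \<subseteq> vec.span (complexify ` B)"
  proof
    fix v assume v: "v \<in> V"
    define a where "a = (\<chi> j. Re (v $ j))"
    define b where "b = (\<chi> j. Im (v $ j))"
    have "a \<in> W" "b \<in> W"
      using v by (auto simp: V_def W_def a_def b_def simp flip: Re_pairing Im_pairing)
    then obtain ca cb where ca: "a = (\<Sum>x\<in>B. ca x *\<^sub>R x)" and cb: "b = (\<Sum>x\<in>B. cb x *\<^sub>R x)"
      using B(3) span_finite[OF \<open>finite B\<close>] by blast
    have "v = (\<Sum>x\<in>B. (complex_of_real (ca x) + \<i> * complex_of_real (cb x)) *s complexify x)"
    proof (subst vec_eq_iff, intro allI)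
      fix j
      have "v $ j = complex_of_real (a $ j) + \<i> * complex_of_real (b $ j)"
        by (simp add: a_def b_def complex_eq_iff)
      then show "v $ j = (\<Sum>x\<in>B. (complex_of_real (ca x) + \<i> * complex_of_real (cb x)) *s complexify x) $ j"
        unfolding ca cb
        by (simp add: sum_component complexify_def algebra_simps sum.distrib sum_distrib_left)
    qed
    also have "\<dots> \<in> vec.span (complexify ` B)"
      by (intro vec.span_sum vec.span_scale vec.span_base) auto
    finally show "v \<in> vec.span (complexify ` B)" .
  qed
  moreover have "vec.independent (complexify ` B)"
    using B(2) by (rule independent_complexify)
  ultimately have "vec.dim V = card (complexify ` B)"
    by (intro vec.dim_unique) auto
  also have "\<dots> = dim W"
    using B(4) card_image[OF inj_on_subset[OF inj_complexify subset_UNIV], of B] by simp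
  also have "\<dots> = CARD('n) - dim (to_real ` S)"
    using dim_orthogonal_vectors[of "to_real ` S"] unfolding W_def by simp
  finally show ?thesis unfolding V_def .
qed

section \<open>Translations and characters of the torus\<close>

definition translate :: "'g monoid \<Rightarrow> ((int^'n) \<times> 'g \<Rightarrow> complex) \<Rightarrow> complex^'n \<Rightarrow> complex
    \<Rightarrow> ((int^'n) \<times> 'g \<Rightarrow> complex)" where
  "translate Gt s v z = (\<lambda>(ch, g). if g \<in> carrier Gt then s (ch, g) * exp (z * pairing v ch) else s (ch, g))"

lemma lie_alg_eq: "lie_alg Gt S = {v. \<forall>s\<in>S. \<forall>z. translate Gt s v z \<in> S}"
  unfolding lie_alg_def translate_def pairing_def by simp

lemma translate_apply:
  "translate Gt s v z (ch, g) = (if g \<in> carrier Gt then s (ch, g) * exp (z * pairing v ch) else s (ch, g))"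
  by (simp add: translate_def)

lemma translate_0 [simp]: "translate Gt s v 0 = s"
  by (auto simp: translate_def fun_eq_iff)

lemma pairing_add: "pairing v (a + b) = pairing v a + pairing v b"
  by (simp add: pairing_def distrib_left sum.distrib)

lemma torus_iff: "t \<in> torus Gt \<longleftrightarrow> (\<forall>v g. g \<in> carrier Gt \<longrightarrow> t (v, g) \<noteq> 0) \<and>
     (\<forall>v w g h. g \<in> carrier Gt \<longrightarrow> h \<in> carrier Gt \<longrightarrow>
         t (v + w, g \<otimes>\<^bsub>Gt\<^esub> h) = t (v, g) * t (w, h)) \<and>
     (\<forall>v g. g \<notin> carrier Gt \<longrightarrow> t (v, g) = 1)"
  unfolding torus_def by simp

lemma translate_mem_torus:
  assumes "monoid Gt" "s \<in> torus Gt"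
  shows "translate Gt s v z \<in> torus Gt"
proof -
  have "translate Gt s v z (a + b, g \<otimes>\<^bsub>Gt\<^esub> h) = translate Gt s v z (a, g) * translate Gt s v z (b, h)"
    if "g \<in> carrier Gt" "h \<in> carrier Gt" for a b g h
  proof -
    have "g \<otimes>\<^bsub>Gt\<^esub> h \<in> carrier Gt" using assms(1) that by (rule monoid.m_closed)
    moreover have "s (a + b, g \<otimes>\<^bsub>Gt\<^esub> h) = s (a, g) * s (b, h)"
      using assms(2) that by (simp add: torus_iff)
    ultimately show ?thesis
      using that by (simp add: translate_apply pairing_add distrib_left exp_add mult_ac)
  qed
  then show ?thesis
    using assms(2) by (auto simp: torus_iff translate_apply)
qed

lemma continuous_on_translate:
  fixes Gt :: "'g monoid" and s :: "(int^'n) \<times> 'g \<Rightarrow> complex"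
  shows "continuous_on UNIV (translate Gt s v)"
proof (rule continuous_on_coordinatewise_then_product)
  fix i :: "(int^'n) \<times> 'g"
  obtain ch g where i: "i = (ch, g)" by fastforce
  show "continuous_on UNIV (\<lambda>z. translate Gt s v z i)"
    unfolding i translate_apply by (cases "g \<in> carrier Gt") (auto intro!: continuous_intros)
qed

lemma translate_mem_component:
  assumes "K \<in> components S" "s \<in> K" "\<And>z. translate Gt s v z \<in> S"
  shows "translate Gt s v z \<in> K"
proof -
  have "range (translate Gt s v) \<subseteq> K"
  proof (rule components_maximal[OF assms(1)])
    show "connected (range (translate Gt s v))"
      by (rule connected_continuous_image[OF continuous_on_translate connected_UNIV])
    show "K \<inter> range (translate Gt s v) \<noteq> {}"
    proof -
      have "translate Gt s v 0 \<in> range (translate Gt s v)" by (rule rangeI)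
      then have "s \<in> K \<inter> range (translate Gt s v)" using assms(2) by simp
      then show ?thesis by blast
    qed
  qed (use assms(3) in blast)
  then show ?thesis by blast
qed

lemma char_eval_translate:
  assumes "monoid Gt"
  shows "char_eval Gt ch (translate Gt s v z) = char_eval Gt ch s * exp (z * pairing v ch)"
  using assms by (simp add: char_eval_def translate_apply monoid.one_closed)

lemma char_eval_nonzero:
  assumes "monoid Gt" "t \<in> torus Gt"
  shows "char_eval Gt a t \<noteq> 0"
  using assms by (simp add: torus_iff char_eval_def monoid.one_closed)

lemma char_eval_add:
  assumes "monoid Gt" "t \<in> torus Gt"
  shows "char_eval Gt (a + b) t = char_eval Gt a t * char_eval Gt b t"
proof -
  have "t (a + b, \<one>\<^bsub>Gt\<^esub> \<otimes>\<^bsub>Gt\<^esub> \<one>\<^bsub>Gt\<^esub>) = t (a, \<one>\<^bsub>Gt\<^esub>) * t (b, \<one>\<^bsub>Gt\<^esub>)"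
    using assms(2) monoid.one_closed[OF assms(1)] unfolding torus_iff by blast
  then show ?thesis
    using assms(1) by (simp add: char_eval_def monoid.l_one monoid.one_closed)
qed

lemma char_eval_0:
  assumes "monoid Gt" "t \<in> torus Gt"
  shows "char_eval Gt 0 t = 1"
  using char_eval_add[OF assms, of 0 0] char_eval_nonzero[OF assms, of 0] by simp

lemma char_eval_smult:
  assumes "monoid Gt" "t \<in> torus Gt"
  shows "char_eval Gt (c *s a) t = char_eval Gt a t powi c"
proof -
  have of_nat: "char_eval Gt (int k *s a) t = char_eval Gt a t ^ k" for k
  proof (induction k)
    case 0
    then show ?case using char_eval_0[OF assms] by (simp add: vec_eq_iff)
  next
    case (Suc k)
    have "int (Suc k) *s a = int k *s a + a" by (simp add: vec_eq_iff algebra_simps)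
    then show ?case using Suc char_eval_add[OF assms] by simp
  qed
  show ?thesis
  proof (cases "c \<ge> 0")
    case True
    then obtain k where "c = int k" using nonneg_int_cases by blast
    then show ?thesis using of_nat by (simp add: power_int_of_nat)
  next
    case False
    define k where "k = nat (- c)"
    have k: "c = - int k" using False by (simp add: k_def)
    have "char_eval Gt (c *s a) t * char_eval Gt a t ^ k = char_eval Gt (c *s a + int k *s a) t"
      using char_eval_add[OF assms] of_nat by simp
    also have "c *s a + int k *s a = 0" using k by (simp add: vec_eq_iff)
    finally have "char_eval Gt (c *s a) t * char_eval Gt a t ^ k = 1"
      using char_eval_0[OF assms] by simp
    then show ?thesis using k char_eval_nonzero[OF assms, of a]
      by (simp add: power_int_minus field_simps power_int_of_nat)
  qed
qed

lemma char_eval_sum: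
  assumes "monoid Gt" "t \<in> torus Gt"
  shows "char_eval Gt (\<Sum>j\<in>J. f j) t = (\<Prod>j\<in>J. char_eval Gt (f j) t)"
proof (induction J rule: infinite_finite_induct)
  case (insert j J)
  then show ?case by (simp add: char_eval_add[OF assms])
qed (simp_all add: char_eval_0[OF assms])

lemma char_eval_mem_lattice_span:
  assumes "monoid Gt" "t \<in> torus Gt" "w \<in> lattice_span L" "\<forall>ch\<in>set L. char_eval Gt ch t = 1"
  shows "char_eval Gt w t = 1"
proof -
  obtain c where "w = (\<Sum>j<length L. c j *s L ! j)"
    using assms(3) unfolding mem_lattice_span_iff ..
  then show ?thesis
    using assms(4) by (simp add: char_eval_sum[OF assms(1,2)] char_eval_smult[OF assms(1,2)])
qed

lemma power_int_eq_1_imp_power_eq_1: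
  fixes z :: "'a::field"
  assumes "z powi k = 1"
  shows "z ^ nat \<bar>k\<bar> = 1"
proof (cases "k \<ge> 0")
  case True
  then show ?thesis using assms by (simp add: power_int_def)
next
  case False
  then have "inverse z ^ nat (- k) = 1" using assms by (simp add: power_int_def)
  then have "inverse (z ^ nat (- k)) = 1" by (simp only: power_inverse)
  then have "z ^ nat (- k) = 1" by (simp only: inverse_eq_1_iff)
  then show ?thesis using False by simp
qed

lemma continuous_on_char_eval: "continuous_on S (char_eval Gt ch)"
  unfolding char_eval_def
  by (rule continuous_on_subset[OF continuous_on_product_coordinates subset_UNIV])

lemma exp_mult_eq_1_imp_zero:
  fixes a c :: complex
  assumes "\<And>z. a * exp (z * c) = 1"
  shows "c = 0"
proof (rule ccontr)
  assume "c \<noteq> 0"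
  have "a = 1" using assms[of 0] by simp
  then have "exp (1::complex) = 1" using assms[of "1 / c"] \<open>c \<noteq> 0\<close> by simp
  then show False
    using norm_exp_eq_Re[of "1::complex"] by simp
qed

lemma H_set_iff: "t \<in> H_set Gt A \<longleftrightarrow> t \<in> torus Gt \<and> (\<forall>ch\<in>A. char_eval Gt ch t = 1)"
  by (auto simp: H_set_def H_chi_def)

lemma H_chi_iff: "t \<in> H_chi Gt ch \<longleftrightarrow> t \<in> torus Gt \<and> char_eval Gt ch t = 1"
  by (simp add: H_chi_def)

lemma pairing_eq_0_if_translate_mem_H_chi:
  assumes "monoid Gt" "\<And>z. translate Gt s v z \<in> H_chi Gt ch"
  shows "pairing v ch = 0"
proof (rule exp_mult_eq_1_imp_zero)
  fix z
  show "char_eval Gt ch s * exp (z * pairing v ch) = 1"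
    using assms(2)[of z] by (simp add: H_chi_iff char_eval_translate[OF assms(1)])
qed

lemma translate_mem_H_set:
  assumes "monoid Gt" "s \<in> H_set Gt B" "\<forall>ch\<in>B. pairing v ch = 0"
  shows "translate Gt s v z \<in> H_set Gt B"
  using assms translate_mem_torus[OF assms(1)]
  by (auto simp: H_set_iff char_eval_translate[OF assms(1)])

lemma ambient_comp:
  assumes "C \<noteq> {}" "connected C" "C \<subseteq> torus Gt"
  shows "ambient_comp Gt C \<in> components (torus Gt)" "C \<subseteq> ambient_comp Gt C"
proof -
  obtain p where p: "p \<in> C" using assms(1) by blast
  define D where "D = connected_component_set (torus Gt) p"
  have D: "D \<in> components (torus Gt) \<and> C \<subseteq> D"
    unfolding D_def components_iff
    using p assms connected_component_maximal[OF p assms(2,3)] by blast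
  have "ambient_comp Gt C = D"
    unfolding ambient_comp_def
  proof (rule the_equality)
    fix D' assume "D' \<in> components (torus Gt) \<and> C \<subseteq> D'"
    then show "D' = D" using D p components_nonoverlap[of D' "torus Gt" D] by blast
  qed (rule D)
  then show "ambient_comp Gt C \<in> components (torus Gt)" "C \<subseteq> ambient_comp Gt C"
    using D by simp_all
qed

section \<open>Layers of the toric arrangement\<close>

locale character_arrangement =
  fixes Gt :: "'g monoid" and X :: "(int^'n) list"
  assumes monoid: "monoid Gt" and nonzero: "\<forall>ch\<in>set X. ch \<noteq> 0"
begin

(* Characters are referred to by their positions in X, which may contain repetitions; vanishing C
  indexes the sublist X_C. *)
definition vanishing :: "((int^'n) \<times> 'g \<Rightarrow> complex) set \<Rightarrow> nat set" where
  "vanishing C = {i. i < length X \<and> C \<subseteq> H_chi Gt (X ! i)}"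

definition H_idx :: "nat set \<Rightarrow> ((int^'n) \<times> 'g \<Rightarrow> complex) set" where
  "H_idx A = H_set Gt ((!) X ` A)"

(* The component of H_A through C; for a connected C inside H_A the choice of the point is
  irrelevant (layer_of_eq_component). *)
definition layer_of :: "nat set \<Rightarrow> ((int^'n) \<times> 'g \<Rightarrow> complex) set \<Rightarrow> ((int^'n) \<times> 'g \<Rightarrow> complex) set" where
  "layer_of A C = connected_component_set (H_idx A) (SOME p. p \<in> C)"

definition generating_sign_sum :: "((int^'n) \<times> 'g \<Rightarrow> complex) set \<Rightarrow> int" where
  "generating_sign_sum C = (\<Sum>A | A \<subseteq> vanishing C \<and> layer_of A C = C. (-1) ^ card A)"

definition real_char :: "nat \<Rightarrow> real^'n" where
  "real_char i = to_real (X ! i)"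

lemma finite_vanishing: "finite (vanishing C)"
  and vanishing_subset: "vanishing C \<subseteq> {..<length X}"
  unfolding vanishing_def by auto

lemma vanishing_antimono: "C \<subseteq> D \<Longrightarrow> vanishing D \<subseteq> vanishing C"
  unfolding vanishing_def by auto

lemma layerD:
  assumes "C \<in> layers Gt X"
  shows "C \<noteq> {}" "connected C" "C \<subseteq> torus Gt"
    and "\<exists>B \<subseteq> set X. C \<in> components (H_set Gt B)"
proof -
  obtain B where B: "B \<subseteq> set X" "C \<in> components (H_set Gt B)"
    using assms unfolding layers_def by auto
  then show "C \<noteq> {}" "connected C" "\<exists>B \<subseteq> set X. C \<in> components (H_set Gt B)"
    using in_components_nonempty in_components_connected by blast+
  show "C \<subseteq> torus Gt"
    using in_components_subset[OF B(2)] by (auto simp: H_set_def)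
qed

lemma ambient_layer: "K \<in> components (torus Gt) \<Longrightarrow> K \<in> layers Gt X"
  unfolding layers_def by (metis H_set_def Int_UNIV_right INF_empty Pow_bottom UN_I)

lemma subset_H_idx_iff: "C \<subseteq> H_idx A \<longleftrightarrow> C \<subseteq> torus Gt \<and> (\<forall>i\<in>A. C \<subseteq> H_chi Gt (X ! i))"
  unfolding H_idx_def by (auto simp: subset_iff H_set_iff H_chi_iff)

lemma subset_H_idx: "A \<subseteq> vanishing C \<Longrightarrow> C \<subseteq> torus Gt \<Longrightarrow> C \<subseteq> H_idx A"
  unfolding subset_H_idx_iff vanishing_def by auto

lemma mem_vanishing_if_component:
  assumes "C \<in> components (H_set Gt B)" "B \<subseteq> set X" "ch \<in> B"
  shows "\<exists>i\<in>vanishing C. ch = X ! i"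
proof -
  obtain i where i: "i < length X" "ch = X ! i"
    using assms(2,3) by (metis in_set_conv_nth subsetD)
  have "C \<subseteq> H_chi Gt ch"
    using in_components_subset[OF assms(1)] assms(3) by (auto simp: H_set_def)
  then show ?thesis using i unfolding vanishing_def by blast
qed

lemma H_idx_vanishing_subset:
  assumes "C \<in> components (H_set Gt B)" "B \<subseteq> set X"
  shows "H_idx (vanishing C) \<subseteq> H_set Gt B"
proof
  fix t assume "t \<in> H_idx (vanishing C)"
  then have t: "t \<in> torus Gt" "\<forall>i\<in>vanishing C. char_eval Gt (X ! i) t = 1"
    by (auto simp: H_idx_def H_set_iff)
  have "char_eval Gt ch t = 1" if "ch \<in> B" for ch
    using mem_vanishing_if_component[OF assms that] t(2) by blast
  then show "t \<in> H_set Gt B" using t(1) by (simp add: H_set_iff)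
qed

lemma layer_of_eq_component:
  assumes "C \<noteq> {}" "connected C" "C \<subseteq> H_idx A" "q \<in> C"
  shows "layer_of A C = connected_component_set (H_idx A) q"
proof -
  have "(SOME p. p \<in> C) \<in> C" using assms(1) by (simp add: some_in_eq)
  then have "C \<subseteq> connected_component_set (H_idx A) (SOME p. p \<in> C)"
    using assms(2,3) by (rule connected_component_maximal)
  then show ?thesis
    unfolding layer_of_def using assms(4) connected_component_eq by blast
qed

lemma layer_of:
  assumes "C \<noteq> {}" "connected C" "C \<subseteq> H_idx A"
  shows "layer_of A C \<in> components (H_idx A)" "C \<subseteq> layer_of A C"
    "connected (layer_of A C)" "layer_of A C \<subseteq> H_idx A"
proof -
  obtain q where q: "q \<in> C" using assms(1) by blast
  note eq = layer_of_eq_component[OF assms q]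
  show "layer_of A C \<in> components (H_idx A)"
    unfolding eq components_iff using q assms(3) by blast
  show "C \<subseteq> layer_of A C"
    unfolding eq by (rule connected_component_maximal[OF q assms(2,3)])
  show "connected (layer_of A C)" "layer_of A C \<subseteq> H_idx A"
    unfolding eq by (simp_all add: connected_component_subset)
qed

lemma layer_of_layer:
  assumes "C \<in> layers Gt X" "A \<subseteq> vanishing C"
  shows "layer_of A C \<in> layers Gt X" "C \<subseteq> layer_of A C"
    "A \<subseteq> vanishing (layer_of A C)" "layer_of A (layer_of A C) = layer_of A C"
proof -
  have CH: "C \<subseteq> H_idx A" using subset_H_idx[OF assms(2)] layerD(3)[OF assms(1)] .
  note L = layer_of[OF layerD(1,2)[OF assms(1)] CH]
  have "(!) X ` A \<subseteq> set X" using assms(2) vanishing_subset[of C] by (auto intro: nth_mem)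
  then show "layer_of A C \<in> layers Gt X"
    using L(1) unfolding layers_def H_idx_def by blast
  show "C \<subseteq> layer_of A C" by (rule L(2))
  show "A \<subseteq> vanishing (layer_of A C)"
    using L(4) assms(2) unfolding subset_H_idx_iff vanishing_def by auto
  obtain q where q: "q \<in> C" using layerD(1)[OF assms(1)] by blast
  have "layer_of A (layer_of A C) = connected_component_set (H_idx A) q"
    by (rule layer_of_eq_component) (use L q in auto)
  also have "\<dots> = layer_of A C"
    using layer_of_eq_component[OF layerD(1,2)[OF assms(1)] CH q] by simp
  finally show "layer_of A (layer_of A C) = layer_of A C" .
qed

lemma layer_eq_layer_of_vanishing:
  assumes "C \<in> layers Gt X" "D \<in> layers Gt X" "C \<subseteq> D"
  shows "D = layer_of (vanishing D) C"
proof -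
  obtain B where B: "B \<subseteq> set X" "D \<in> components (H_set Gt B)"
    using layerD(4)[OF assms(2)] by blast
  have DH: "D \<subseteq> H_idx (vanishing D)" using subset_H_idx layerD(3)[OF assms(2)] by blast
  then have CH: "C \<subseteq> H_idx (vanishing D)" using assms(3) by blast
  note L = layer_of[OF layerD(1,2)[OF assms(1)] CH]
  obtain q where q: "q \<in> C" using layerD(1)[OF assms(1)] by blast
  have "D \<subseteq> layer_of (vanishing D) C"
    unfolding layer_of_eq_component[OF layerD(1,2)[OF assms(1)] CH q]
    by (rule connected_component_maximal) (use q assms(3) layerD(2)[OF assms(2)] DH in auto)
  moreover have "layer_of (vanishing D) C \<subseteq> D"
  proof (rule components_maximal[OF B(2) L(3)])
    show "layer_of (vanishing D) C \<subseteq> H_set Gt B"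
      using L(4) H_idx_vanishing_subset[OF B(2,1)] by blast
    show "D \<inter> layer_of (vanishing D) C \<noteq> {}"
      using L(2) q assms(3) by blast
  qed
  ultimately show ?thesis by blast
qed

lemma card_vanishing_less:
  assumes "C \<in> layers Gt X" "D \<in> layers Gt X" "C \<subseteq> D" "D \<noteq> C"
  shows "card (vanishing D) < card (vanishing C)"
proof -
  have "vanishing D \<noteq> vanishing C"
  proof
    assume eq: "vanishing D = vanishing C"
    have "D = layer_of (vanishing D) C" by (rule layer_eq_layer_of_vanishing[OF assms(1-3)])
    also have "\<dots> = C"
      using eq layer_eq_layer_of_vanishing[OF assms(1) assms(1)] by simp
    finally show False using assms(4) by simp
  qed
  then show ?thesis
    using vanishing_antimono[OF assms(3)] finite_vanishing by (meson psubsetI psubset_card_mono)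
qed

lemma pairing_eq_0_if_translates_stay:
  assumes "s \<in> C" "\<And>z. translate Gt s v z \<in> C" "i \<in> vanishing C"
  shows "pairing v (X ! i) = 0"
  using assms(3) by (intro pairing_eq_0_if_translate_mem_H_chi[OF monoid])
    (use assms(2) in \<open>auto simp: vanishing_def\<close>)

(* Translating along the character itself moves its value, so no character is constant on a
  component of T. *)
lemma vanishing_ambient:
  assumes "K \<in> components (torus Gt)"
  shows "vanishing K = {}"
proof (rule ccontr)
  assume "vanishing K \<noteq> {}"
  then obtain i where i: "i \<in> vanishing K" by blast
  define ch where "ch = X ! i"
  have "ch \<noteq> 0" using nonzero i unfolding ch_def vanishing_def by auto
  then obtain j where j: "ch $ j \<noteq> 0" by (metis vec_eq_iff zero_index)
  obtain s where s: "s \<in> K" using in_components_nonempty[OF assms] by blast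
  define v :: "complex^'n" where "v = (\<chi> j. of_int (ch $ j))"
  have "translate Gt s v z \<in> K" for z
    by (rule translate_mem_component[OF assms s])
      (use s in_components_subset[OF assms] translate_mem_torus[OF monoid] in blast)
  then have "pairing v ch = 0"
    unfolding ch_def using pairing_eq_0_if_translates_stay[OF s _ i] by blast
  then have "(\<Sum>j\<in>UNIV. (ch $ j)^2) = 0"
    by (simp add: pairing_def v_def power2_eq_square flip: of_int_mult of_int_sum)
  moreover have "(ch $ j)^2 \<le> (\<Sum>j\<in>UNIV. (ch $ j)^2)"
    by (rule member_le_sum) auto
  ultimately show False using j by simp
qed

lemma layer_eq_ambient_if_vanishing_empty:
  assumes "C \<in> layers Gt X" "K \<in> components (torus Gt)" "C \<subseteq> K" "vanishing C = {}"
  shows "C = K"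
proof -
  obtain B where B: "B \<subseteq> set X" "C \<in> components (H_set Gt B)"
    using layerD(4)[OF assms(1)] by blast
  have "H_set Gt B = torus Gt"
    using H_idx_vanishing_subset[OF B(2,1)] assms(4) by (auto simp: H_idx_def H_set_def)
  then have "C \<in> components (torus Gt)"
    using B(2) by simp
  then show ?thesis
    using components_nonoverlap[OF _ assms(2)] assms(3) layerD(1)[OF assms(1)] by blast
qed

lemma layer_of_subset_ambient:
  assumes "C \<in> layers Gt X" "A \<subseteq> vanishing C" "K \<in> components (torus Gt)" "C \<subseteq> K"
  shows "layer_of A C \<subseteq> K"
proof -
  have CH: "C \<subseteq> H_idx A" using subset_H_idx[OF assms(2)] layerD(3)[OF assms(1)] .
  note L = layer_of[OF layerD(1,2)[OF assms(1)] CH]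
  show ?thesis
  proof (rule components_maximal[OF assms(3) L(3)])
    show "layer_of A C \<subseteq> torus Gt" using L(4) by (auto simp: H_idx_def H_set_def)
    show "K \<inter> layer_of A C \<noteq> {}" using L(2) assms(4) layerD(1)[OF assms(1)] by blast
  qed
qed

lemma layer_of_above:
  assumes "C \<in> layers Gt X" "D \<in> layers Gt X" "C \<subseteq> D" "A \<subseteq> vanishing D"
  shows "layer_of A D = layer_of A C"
proof -
  obtain q where q: "q \<in> C" using layerD(1)[OF assms(1)] by blast
  have DH: "D \<subseteq> H_idx A" using subset_H_idx[OF assms(4)] layerD(3)[OF assms(2)] .
  then have CH: "C \<subseteq> H_idx A" using assms(3) by blast
  show ?thesis
    using layer_of_eq_component[OF layerD(1,2)[OF assms(2)] DH, of q]
      layer_of_eq_component[OF layerD(1,2)[OF assms(1)] CH q] q assms(3) by auto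
qed

lemma finite_layers_above:
  assumes "C \<in> layers Gt X"
  shows "finite {D \<in> layers Gt X. C \<subseteq> D}"
proof (rule finite_subset[OF _ finite_imageI[OF finite_Pow_iff[THEN iffD2, OF finite_vanishing]]])
  show "{D \<in> layers Gt X. C \<subseteq> D} \<subseteq> (\<lambda>A. layer_of A C) ` Pow (vanishing C)"
  proof
    fix D assume D: "D \<in> {D \<in> layers Gt X. C \<subseteq> D}"
    then have "D = layer_of (vanishing D) C"
      using layer_eq_layer_of_vanishing[OF assms] by blast
    moreover have "vanishing D \<subseteq> vanishing C" using D vanishing_antimono by blast
    ultimately show "D \<in> (\<lambda>A. layer_of A C) ` Pow (vanishing C)" by blast
  qed
qed

(* Every set of characters vanishing on C cuts out exactly one layer between C and the ambient
  component, so the generating sets of these layers partition the power set of vanishing C. *)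
lemma sum_generating_sign_sum_interval:
  assumes C: "C \<in> layers Gt X" and K: "K \<in> components (torus Gt)" "C \<subseteq> K"
  shows "(\<Sum>D | D \<in> layers Gt X \<and> C \<subseteq> D \<and> D \<subseteq> K. generating_sign_sum D)
    = (if vanishing C = {} then 1 else 0)"
proof -
  define Z where "Z = {D \<in> layers Gt X. C \<subseteq> D \<and> D \<subseteq> K}"
  define S where "S D = {A. A \<subseteq> vanishing D \<and> layer_of A D = D}" for D
  have "finite Z"
    using finite_layers_above[OF C] by (rule finite_subset[rotated]) (auto simp: Z_def)
  have "finite (S D)" for D
    by (rule finite_subset[of _ "Pow (vanishing D)"]) (auto simp: S_def finite_vanishing)
  have generated: "D = layer_of A C" if "D \<in> Z" "A \<in> S D" for D A
    using that layer_of_above[OF C, of D A] unfolding S_def Z_def by auto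
  then have disjoint: "S D1 \<inter> S D2 = {}" if "D1 \<in> Z" "D2 \<in> Z" "D1 \<noteq> D2" for D1 D2
    using that by blast
  have "\<Union>(S ` Z) = Pow (vanishing C)"
  proof
    show "\<Union>(S ` Z) \<subseteq> Pow (vanishing C)"
      using vanishing_antimono unfolding S_def Z_def by blast
    show "Pow (vanishing C) \<subseteq> \<Union>(S ` Z)"
    proof
      fix A assume "A \<in> Pow (vanishing C)"
      then have A: "A \<subseteq> vanishing C" by simp
      note L = layer_of_layer[OF C A]
      have "layer_of A C \<in> Z"
        unfolding Z_def using L(1,2) layer_of_subset_ambient[OF C A K] by blast
      moreover have "A \<in> S (layer_of A C)" unfolding S_def using L(3,4) by blast
      ultimately show "A \<in> \<Union>(S ` Z)" by blast
    qed
  qed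
  then have "(\<Sum>D\<in>Z. \<Sum>A\<in>S D. (-1::int) ^ card A) = (\<Sum>A\<in>Pow (vanishing C). (-1) ^ card A)"
    using sum.UNION_disjoint[OF \<open>finite Z\<close>, of S "\<lambda>A. (-1::int) ^ card A"] \<open>\<And>D. finite (S D)\<close> disjoint
    by auto
  then show ?thesis
    using sum_Pow_neg_one_power[OF finite_vanishing]
    unfolding Z_def S_def generating_sign_sum_def by simp
qed

lemma mobius_ambient_eq_generating_sign_sum:
  assumes K: "K \<in> components (torus Gt)"
  shows "C \<in> layers Gt X \<Longrightarrow> C \<subseteq> K \<Longrightarrow> mobius (layers Gt X) (\<lambda>D E. E \<subseteq> D) K C = generating_sign_sum C"
proof (induction "card (vanishing C)" arbitrary: C rule: less_induct)
  case less
  note C = less.prems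
  let ?P = "layers Gt X" and ?le = "\<lambda>D E. E \<subseteq> D"
  have KP: "K \<in> ?P" using ambient_layer[OF K] .
  have step: "mobius ?P ?le K C = mobius_step ?P ?le (mobius ?P ?le) K C"
    by (rule mobius_eq_step[where m = "\<lambda>D. card (vanishing D)"]) (use card_vanishing_less in blast)
  define Z where "Z = {D. D \<in> ?P \<and> C \<subseteq> D \<and> D \<subseteq> K}"
  have sum_Z: "(\<Sum>D\<in>Z. generating_sign_sum D) = (if vanishing C = {} then 1 else 0)"
    unfolding Z_def by (rule sum_generating_sign_sum_interval[OF C(1) K C(2)])
  show ?case
  proof (cases "C = K")
    case True
    then have "Z = {K}" using KP by (auto simp: Z_def)
    then show ?thesis using sum_Z vanishing_ambient[OF K] step True KP by (simp add: mobius_step_def)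
  next
    case False
    have "vanishing C \<noteq> {}"
      using layer_eq_ambient_if_vanishing_empty[OF C(1) K C(2)] False by blast
    have "finite Z"
      using finite_layers_above[OF C(1)] by (rule finite_subset[rotated]) (auto simp: Z_def)
    have "C \<in> Z" using C by (simp add: Z_def)
    have IH: "mobius ?P ?le K D = generating_sign_sum D" if "D \<in> Z - {C}" for D
      using that less.hyps card_vanishing_less[OF C(1)] unfolding Z_def by auto
    have "{D \<in> ?P. ?le K D \<and> ?le D C \<and> D \<noteq> C} = Z - {C}"
      by (auto simp: Z_def)
    then have "mobius ?P ?le K C = - (\<Sum>D\<in>Z - {C}. mobius ?P ?le K D)"
      using step KP C False by (simp add: mobius_step_def)
    also have "\<dots> = - (\<Sum>D\<in>Z - {C}. generating_sign_sum D)"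
      using IH by simp
    also have "\<dots> = generating_sign_sum C"
      using sum_Z \<open>vanishing C \<noteq> {}\<close> sum_diff1[OF \<open>finite Z\<close>, of generating_sign_sum C]
        \<open>C \<in> Z\<close> by simp
    finally show ?thesis .
  qed
qed

(* A nonzero multiple of X ! i is an integer combination of the characters in A, so on H_A the
  character X ! i only takes values among finitely many roots of unity; being continuous it is
  constant on the connected layer, and it is 1 on C. *)
lemma char_eval_eq_1_on_layer_of:
  assumes C: "C \<in> layers Gt X" and A: "A \<subseteq> vanishing C" and i: "i \<in> vanishing C"
    and span: "real_char i \<in> span (real_char ` A)" and t: "t \<in> layer_of A C"
  shows "char_eval Gt (X ! i) t = 1"
proof -
  define L where "L = map ((!) X) (sorted_list_of_set A)"
  have "set L = (!) X ` A"
    using finite_subset[OF A finite_vanishing] by (simp add: L_def)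
  then have "to_real (X ! i) \<in> span (to_real ` set L)"
    using span by (simp add: real_char_def image_image)
  then obtain k where k: "k \<noteq> 0" "k *s X ! i \<in> lattice_span L"
    using multiple_in_lattice_span_if_in_span by blast
  have root: "char_eval Gt (X ! i) u ^ nat \<bar>k\<bar> = 1" if "u \<in> H_idx A" for u
  proof (rule power_int_eq_1_imp_power_eq_1)
    have u: "u \<in> torus Gt" "\<forall>ch\<in>set L. char_eval Gt ch u = 1"
      using that \<open>set L = (!) X ` A\<close> by (auto simp: H_idx_def H_set_iff)
    show "char_eval Gt (X ! i) u powi k = 1"
      using char_eval_mem_lattice_span[OF monoid u(1) k(2) u(2)]
      by (simp add: char_eval_smult[OF monoid u(1)])
  qed
  have CH: "C \<subseteq> H_idx A" using subset_H_idx[OF A] layerD(3)[OF C] .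
  note L = layer_of[OF layerD(1,2)[OF C] CH]
  let ?values = "char_eval Gt (X ! i) ` layer_of A C"
  have "connected ?values"
    by (rule connected_continuous_image[OF continuous_on_char_eval L(3)])
  moreover have "finite ?values"
    by (rule finite_subset[OF _ finite_roots_unity[of "nat \<bar>k\<bar>"]]) (use root L(4) k(1) in auto)
  moreover obtain p where "p \<in> C" using layerD(1)[OF C] by blast
  then have "1 \<in> ?values"
    using L(2) i by (force simp: vanishing_def H_chi_iff)
  moreover note connected_finite_iff_sing
  ultimately obtain a where "?values = {a}"
    by blast
  moreover have "char_eval Gt (X ! i) t \<in> ?values" using t by (rule imageI)
  ultimately show ?thesis using \<open>1 \<in> ?values\<close> by simp
qed

lemma layer_of_eq_if_span_eq:
  assumes C: "C \<in> layers Gt X" and A: "A \<subseteq> vanishing C"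
    and span: "span (real_char ` A) = span (real_char ` vanishing C)"
  shows "layer_of A C = C"
proof -
  obtain B where B: "B \<subseteq> set X" "C \<in> components (H_set Gt B)"
    using layerD(4)[OF C] by blast
  have CH: "C \<subseteq> H_idx A" using subset_H_idx[OF A] layerD(3)[OF C] .
  note L = layer_of[OF layerD(1,2)[OF C] CH]
  have "layer_of A C \<subseteq> H_set Gt B"
  proof
    fix t assume t: "t \<in> layer_of A C"
    have "char_eval Gt ch t = 1" if "ch \<in> B" for ch
    proof -
      obtain i where i: "i \<in> vanishing C" "ch = X ! i"
        using mem_vanishing_if_component[OF B(2,1) \<open>ch \<in> B\<close>] by blast
      have "real_char i \<in> span (real_char ` A)"
        unfolding span using i(1) by (blast intro: span_base)
      then show ?thesis
        using char_eval_eq_1_on_layer_of[OF C A i(1) _ t] i(2) by simp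
    qed
    moreover have "t \<in> torus Gt" using t L(4) by (auto simp: H_idx_def H_set_iff)
    ultimately show "t \<in> H_set Gt B" by (simp add: H_set_iff)
  qed
  then have "layer_of A C \<subseteq> C"
    using components_maximal[OF B(2) L(3)] L(2) layerD(1)[OF C] by blast
  then show ?thesis using L(2) by blast
qed

(* Otherwise a direction w orthogonal to A but not to real_char i translates C inside H_A, hence
  inside its component C, while changing the value of X ! i. *)
lemma span_eq_if_layer_of_eq:
  assumes C: "C \<in> layers Gt X" and A: "A \<subseteq> vanishing C" and eq: "layer_of A C = C"
  shows "span (real_char ` A) = span (real_char ` vanishing C)"
proof -
  have CH: "C \<subseteq> H_idx A" using subset_H_idx[OF A] layerD(3)[OF C] .
  note L = layer_of[OF layerD(1,2)[OF C] CH]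
  have "real_char i \<in> span (real_char ` A)" if i: "i \<in> vanishing C" for i
  proof (rule ccontr)
    assume not_span: "real_char i \<notin> span (real_char ` A)"
    obtain y w where yw: "y \<in> span (real_char ` A)" "\<And>u. u \<in> span (real_char ` A) \<Longrightarrow> orthogonal w u"
        "real_char i = y + w"
      using orthogonal_subspace_decomp_exists[of "real_char ` A" "real_char i"] by blast
    have "w \<noteq> 0" using yw(1,3) not_span by auto
    obtain s where s: "s \<in> C" using layerD(1)[OF C] by blast
    have "pairing (complexify w) (X ! a) = 0" if "a \<in> A" for a
      using yw(2)[OF span_base] that by (simp add: pairing_complexify real_char_def orthogonal_def)
    then have "translate Gt s (complexify w) z \<in> H_idx A" for z
      using CH s unfolding H_idx_def by (intro translate_mem_H_set[OF monoid]) auto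
    then have "translate Gt s (complexify w) z \<in> C" for z
      using translate_mem_component[OF L(1)] s L(2) eq by blast
    then have "pairing (complexify w) (X ! i) = 0"
      using pairing_eq_0_if_translates_stay[OF s _ i] by blast
    moreover have "w \<bullet> real_char i = w \<bullet> w"
      using yw(1,2,3) by (simp add: inner_add_right orthogonal_def)
    ultimately show False
      using \<open>w \<noteq> 0\<close> by (simp add: pairing_complexify real_char_def)
  qed
  then show ?thesis
    using A by (auto simp: span_eq intro: span_base)
qed

lemma layer_of_eq_iff_span_eq:
  assumes "C \<in> layers Gt X" "A \<subseteq> vanishing C"
  shows "layer_of A C = C \<longleftrightarrow> span (real_char ` A) = span (real_char ` vanishing C)"
  using layer_of_eq_if_span_eq[OF assms] span_eq_if_layer_of_eq[OF assms] by blast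

lemma lie_alg_layer:
  assumes C: "C \<in> layers Gt X"
  shows "lie_alg Gt C = {v. \<forall>ch\<in>(!) X ` vanishing C. pairing v ch = 0}"
proof (intro subset_antisym subsetI)
  fix v assume "v \<in> lie_alg Gt C"
  then have "translate Gt s v z \<in> C" if "s \<in> C" for s z
    using that by (simp add: lie_alg_eq)
  moreover obtain s where "s \<in> C" using layerD(1)[OF C] by blast
  ultimately show "v \<in> {v. \<forall>ch\<in>(!) X ` vanishing C. pairing v ch = 0}"
    using pairing_eq_0_if_translates_stay by blast
next
  fix v assume v: "v \<in> {v. \<forall>ch\<in>(!) X ` vanishing C. pairing v ch = 0}"
  obtain B where B: "B \<subseteq> set X" "C \<in> components (H_set Gt B)"
    using layerD(4)[OF C] by blast
  have "\<forall>ch\<in>B. pairing v ch = 0"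
    using v mem_vanishing_if_component[OF B(2,1)] by blast
  then have "translate Gt s v z \<in> C" if "s \<in> C" for s z
    using that in_components_subset[OF B(2)]
    by (intro translate_mem_component[OF B(2) that] translate_mem_H_set[OF monoid]) auto
  then show "v \<in> lie_alg Gt C"
    by (simp add: lie_alg_eq)
qed

lemma codim_layer:
  assumes "C \<in> layers Gt X"
  shows "CARD('n) - cdim Gt C = dim (real_char ` vanishing C)"
proof -
  have "real_char ` vanishing C = to_real ` (!) X ` vanishing C"
    by (auto simp: real_char_def)
  moreover have "dim (real_char ` vanishing C) \<le> CARD('n)"
    using dim_subset_UNIV[of "real_char ` vanishing C"] by simp
  ultimately show ?thesis
    unfolding cdim_def lie_alg_layer[OF assms] dim_pairing_annihilator by simp
qed

lemma nbc_layer: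
  assumes "C \<in> layers Gt X"
  shows "nbc (map to_real (filter (\<lambda>ch. C \<subseteq> H_chi Gt ch) X))
    = (-1) ^ dim (real_char ` vanishing C) * generating_sign_sum C"
proof -
  define idx where "idx = filter (\<lambda>i. C \<subseteq> H_chi Gt (X ! i)) [0..<length X]"
  have "filter (\<lambda>ch. C \<subseteq> H_chi Gt ch) X = filter (\<lambda>ch. C \<subseteq> H_chi Gt ch) (map ((!) X) [0..<length X])"
    by (simp add: map_nth)
  also have "\<dots> = map ((!) X) idx"
    by (simp add: filter_map idx_def comp_def)
  finally have "filter (\<lambda>ch. C \<subseteq> H_chi Gt ch) X = map ((!) X) idx" .
  then have "map to_real (filter (\<lambda>ch. C \<subseteq> H_chi Gt ch) X) = map real_char idx"
    by (simp add: real_char_def comp_def)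
  moreover have "distinct idx" "set idx = vanishing C"
    by (auto simp: idx_def vanishing_def)
  moreover have "{B \<in> Pow (vanishing C). span (real_char ` B) = span (real_char ` vanishing C)}
      = {A. A \<subseteq> vanishing C \<and> layer_of A C = C}"
    using layer_of_eq_iff_span_eq[OF assms] by auto
  ultimately show ?thesis
    unfolding generating_sign_sum_def by (simp add: nbc_map_distinct)
qed

end

theorem lemma5p9:
  fixes Gt :: "'g monoid" and X :: "(int^'n) list"
    and C :: "((int^'n) \<times> 'g \<Rightarrow> complex) set"
  assumes "comm_group Gt" and "finite (carrier Gt)"
    and "\<forall>ch\<in>set X. ch \<noteq> 0"
    and "finite_index (lattice_span X)"
    and "C \<in> layers Gt X"
  shows "nbc (map to_real (filter (\<lambda>ch. C \<subseteq> H_chi Gt ch) X))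
           = (-1) ^ (CARD('n) - cdim Gt C)
             * mobius (layers Gt X) (\<lambda>D E. E \<subseteq> D) (ambient_comp Gt C) C"
proof -
  \<comment> \<open>Finiteness of carrier Gt and the finite-index hypothesis are not needed, and the
    group structure of Gt only enters through its multiplication being a monoid.\<close>
  interpret character_arrangement Gt X
    by (rule character_arrangement.intro[OF group.is_monoid[OF comm_group.axioms(2)[OF assms(1)]] assms(3)])
  note C = assms(5)
  have "ambient_comp Gt C \<in> components (torus Gt)" "C \<subseteq> ambient_comp Gt C"
    using ambient_comp layerD(1-3)[OF C] by blast+
  then have "mobius (layers Gt X) (\<lambda>D E. E \<subseteq> D) (ambient_comp Gt C) C = generating_sign_sum C"
    using mobius_ambient_eq_generating_sign_sum C by blast
  then show ?thesis
    using nbc_layer[OF C] codim_layer[OF C] by simp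
qed

end
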